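(* Let $k\ge 1$ be even. Then for every compact domain $\Omega\subset\mathbb{R}^{2k+1}$ with smooth boundary and every closed Dirichlet $(k+1)$-form $\alpha$ on $\Omega$, the helicity $H(\alpha)=0$.
   Context: A differential $p$-form on $\Omega$ is Dirichlet if its pullback to $\partial\Omega$ vanishes. $C_2[\Omega]$ denotes the Fulton–MacPherson compactification of $C_2(\Omega)=\{(x,y)\in\Omega^2:x\ne y\}$ (the closure of the image of $C_2(\Omega)$ under $(x,y)\mapsto(x,y,\frac{x-y}{|x-y|},\frac{y-x}{|y-x|})\in\Omega^2\times(S^{2k})^2$), a compact manifold with corners oriented as $\Omega\times\Omega$, with surjection $p:C_2[\Omega]\to\Omega\times\Omega$. For a form $\alpha$ on $\Omega$, $\alpha_x,\alpha_y$ are the pullbacks of $\alpha$ under $\mathrm{pr}_1\circ p$ and $\mathrm{pr}_2\circ p$. The Gauss map $g:C_2[\Omega]\to S^{2k}$ is the smooth extension of $(x,y)\mapsto (y-x)/|y-x|$. Let $\omega$ be the rotation-invariant volume form on $S^{2k}$ with total integral $1$. The helicity of a closed Dirichlet $(k+1)$-form $\alpha$ is $H(\alpha)=\int_{C_2[\Omega]}\alpha_x\wedge\alpha_y\wedge g^*\omega$. *)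

theory Defs
  imports "HOL-Analysis.Analysis"
begin

fun Ck_on :: "nat \<Rightarrow> 'a::real_normed_vector set \<Rightarrow> ('a \<Rightarrow> real) \<Rightarrow> bool" where
  "Ck_on 0 U f = continuous_on U f"
| "Ck_on (Suc m) U f =
     (f differentiable_on U \<and> (\<forall>v. Ck_on m U (\<lambda>x. frechet_derivative f (at x) v)))"

definition smooth_on :: "'a::real_normed_vector set \<Rightarrow> ('a \<Rightarrow> real) \<Rightarrow> bool" where
  "smooth_on U f \<longleftrightarrow> (\<forall>m. Ck_on m U f)"

definition local_defining_function ::
  "'a::euclidean_space set \<Rightarrow> 'a \<Rightarrow> 'a set \<Rightarrow> ('a \<Rightarrow> real) \<Rightarrow> bool" where
  "local_defining_function \<Omega> p V \<rho> \<longleftrightarrow>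
     open V \<and> p \<in> V \<and> smooth_on V \<rho> \<and>
     (\<forall>x\<in>V. frechet_derivative \<rho> (at x) \<noteq> (\<lambda>v. 0)) \<and>
     \<Omega> \<inter> V = {x\<in>V. \<rho> x \<le> 0}"

definition smooth_boundary :: "'a::euclidean_space set \<Rightarrow> bool" where
  "smooth_boundary \<Omega> \<longleftrightarrow> (\<forall>p\<in>frontier \<Omega>. \<exists>V \<rho>. local_defining_function \<Omega> p V \<rho>)"

section \<open>Differential forms, represented pointwise as alternating multilinear maps\<close>

definition alt_form :: "nat \<Rightarrow> ('v::real_vector list \<Rightarrow> real) \<Rightarrow> bool" where
  "alt_form p A \<longleftrightarrow>
     (\<forall>vs i. length vs = p \<longrightarrow> i < p \<longrightarrow> linear (\<lambda>v. A (vs[i := v]))) \<and>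
     (\<forall>vs i j. length vs = p \<longrightarrow> i < j \<longrightarrow> j < p \<longrightarrow> vs ! i = vs ! j \<longrightarrow> A vs = 0)"

definition diff_form :: "nat \<Rightarrow> 'a::euclidean_space set \<Rightarrow> ('a \<Rightarrow> 'a list \<Rightarrow> real) \<Rightarrow> bool" where
  "diff_form p U \<alpha> \<longleftrightarrow> (\<forall>x\<in>U. alt_form p (\<alpha> x)) \<and> (\<forall>vs. smooth_on U (\<lambda>x. \<alpha> x vs))"

definition del_nth :: "nat \<Rightarrow> 'b list \<Rightarrow> 'b list" where
  "del_nth i vs = take i vs @ drop (Suc i) vs"

text \<open>Exterior derivative (coordinate-free formula with constant vector fields).\<close>
definition ext_d :: "('a::real_normed_vector \<Rightarrow> 'a list \<Rightarrow> real) \<Rightarrow> 'a \<Rightarrow> 'a list \<Rightarrow> real" where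
  "ext_d \<alpha> x vs =
     (\<Sum>i<length vs. (-1) ^ i * frechet_derivative (\<lambda>y. \<alpha> y (del_nth i vs)) (at x) (vs ! i))"

text \<open>Wedge product of a p-covector and a q-covector (shuffle formula).\<close>
definition wedge :: "nat \<Rightarrow> nat \<Rightarrow> ('v list \<Rightarrow> real) \<Rightarrow> ('v list \<Rightarrow> real) \<Rightarrow> 'v list \<Rightarrow> real" where
  "wedge p q a b vs =
     (\<Sum>S\<in>{S. S \<subseteq> {..<p+q} \<and> card S = p}.
        (-1) ^ (\<Sum>S - p * (p - 1) div 2) * a (nths vs S) * b (nths vs ({..<p+q} - S)))"

text \<open>Dirichlet condition: the pullback to the boundary vanishes, i.e. the form vanishes
  on tuples of vectors tangent to the boundary (tangent space = kernel of d rho).\<close>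
definition dirichlet :: "nat \<Rightarrow> 'a::euclidean_space set \<Rightarrow> ('a \<Rightarrow> 'a list \<Rightarrow> real) \<Rightarrow> bool" where
  "dirichlet p \<Omega> \<alpha> \<longleftrightarrow>
     (\<forall>x\<in>frontier \<Omega>. \<forall>V \<rho>. local_defining_function \<Omega> x V \<rho> \<longrightarrow>
        (\<forall>vs. length vs = p \<longrightarrow> (\<forall>v\<in>set vs. frechet_derivative \<rho> (at x) v = 0) \<longrightarrow> \<alpha> x vs = 0))"

text \<open>A fixed enumeration of the coordinate index type (fixes an orientation convention).\<close>
definition enum_idx :: "'n::finite list" where
  "enum_idx = (SOME xs. distinct xs \<and> set xs = UNIV)"

definition idx_pos :: "'n::finite \<Rightarrow> nat" where
  "idx_pos i = (SOME m. m < length (enum_idx :: 'n list) \<and> enum_idx ! m = i)"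

definition list_det :: "(real^'n::finite) list \<Rightarrow> real" where
  "list_det vs = det (\<chi> i j. (vs ! idx_pos i) $ j)"

definition sphere_area :: "'n::finite itself \<Rightarrow> real" where
  "sphere_area _ = real CARD('n) * measure lborel (ball (0::real^'n) 1)"

text \<open>Rotation-invariant volume form of the unit sphere, normalised to total integral 1.\<close>
definition sphere_vol :: "real^'n::finite \<Rightarrow> (real^'n) list \<Rightarrow> real" where
  "sphere_vol u vs = list_det (u # vs) / sphere_area TYPE('n)"

definition gauss :: "(real^'n::finite) \<times> (real^'n) \<Rightarrow> real^'n" where
  "gauss z = (snd z - fst z) /\<^sub>R norm (snd z - fst z)"

definition gauss_pullback :: "(real^'n::finite) \<times> (real^'n) \<Rightarrow> ((real^'n) \<times> (real^'n)) list \<Rightarrow> real" where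
  "gauss_pullback z ws = sphere_vol (gauss z) (map (frechet_derivative gauss (at z)) ws)"

definition prod_basis :: "((real^'n::finite) \<times> (real^'n)) list" where
  "prod_basis = map (\<lambda>i. (axis i 1, 0)) enum_idx @ map (\<lambda>i. (0, axis i 1)) enum_idx"

definition config2 :: "(real^'n::finite) set \<Rightarrow> ((real^'n) \<times> (real^'n)) set" where
  "config2 \<Omega> = {(x, y). x \<in> \<Omega> \<and> y \<in> \<Omega> \<and> x \<noteq> y}"

text \<open>Density of the top form alpha_x ^ alpha_y ^ g^*omega w.r.t. the oriented frame of R^n x R^n.\<close>
definition helicity_density ::
  "nat \<Rightarrow> (real^'n::finite \<Rightarrow> (real^'n) list \<Rightarrow> real) \<Rightarrow> (real^'n) \<times> (real^'n) \<Rightarrow> real" where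
  "helicity_density p \<alpha> z =
     wedge (2 * p) (CARD('n) - 1)
       (wedge p p (\<lambda>ws. \<alpha> (fst z) (map fst ws)) (\<lambda>ws. \<alpha> (snd z) (map snd ws)))
       (gauss_pullback z) prod_basis"

text \<open>Integral over C_2[Omega]: the boundary strata have measure zero, so it is the
  Lebesgue integral over the open configuration space C_2(Omega).\<close>
definition helicity :: "nat \<Rightarrow> (real^'n::finite) set \<Rightarrow> (real^'n \<Rightarrow> (real^'n) list \<Rightarrow> real) \<Rightarrow> real" where
  "helicity p \<Omega> \<alpha> = set_lebesgue_integral lborel (config2 \<Omega>) (helicity_density p \<alpha>)"

end

theory Submission
  imports Defs
begin

text \<open>
  Helicity vanishes for even k by a symmetry argument.  The configuration space C_2(Omega)
  is invariant under the exchange (x, y) \<mapsto> (y, x), which preserves Lebesgue measure on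
  R^n \<times> R^n.  We show that for n = 2k + 1 with k even the helicity density is odd under
  this exchange, so its integral vanishes.

  The density is the wedge product (alpha_x \<and> alpha_y) \<and> g^*omega evaluated on the standard
  frame of R^n \<times> R^n.  Expanding both wedge products over shuffles, only the shuffles whose
  alpha-part picks k+1 frame vectors from each factor survive, and each surviving term is
  alpha(x) \<cdot> alpha(y) times a determinant det(u, X, Y), where u is the Gauss direction and
  X, Y are the images of the remaining frame vectors under the derivative L of the Gauss map.
  Exchanging x and y
  (i) replaces u by -u and L by -L \<circ> swap,
  (ii) exchanges the two halves of the frame, i.e. reindexes shuffles by the index map
  that exchanges {..<n} and {n..<2n}.
  The determinant then changes by (-1)^n (negation of all 2k+1 columns) times (-1)^k
  (exchanging two blocks of k columns), which is -1 for k even, while the shuffle signs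
  agree.  Summing over all shuffles gives the oddness.
\<close>

section \<open>Integrals of functions that are odd under the exchange of factors\<close>

text \<open>Lebesgue measure on a product is invariant under swapping the factors, so a function
  that changes sign under the swap has integral zero (also when it is not integrable).\<close>
lemma integral_swap_odd:
  fixes h :: "('a::euclidean_space \<times> 'a) \<Rightarrow> real"
  assumes "\<And>z. h (prod.swap z) = - h z"
  shows "integral\<^sup>L lborel h = 0"
proof (cases "integrable lborel h")
  case True
  then have "h \<in> borel_measurable (lborel \<Otimes>\<^sub>M lborel)"
    unfolding lborel_prod by (rule borel_measurable_integrable)
  then have "(\<integral>(x,y). h (y,x) \<partial>(lborel \<Otimes>\<^sub>M lborel)) = integral\<^sup>L (lborel \<Otimes>\<^sub>M lborel) h"
    by (rule lborel_pair.integral_product_swap)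
  moreover have "(\<lambda>(x,y). h (y,x)) = (\<lambda>z. - h z)"
  proof
    fix z :: "'a \<times> 'a"
    show "(\<lambda>(x,y). h (y,x)) z = - h z"
      using assms[of z] by (cases z) (simp only: prod.swap_def split fst_conv snd_conv)
  qed
  ultimately have "integral\<^sup>L lborel (\<lambda>z. - h z) = integral\<^sup>L lborel h"
    unfolding lborel_prod by simp
  then show ?thesis unfolding integral_minus by linarith
next
  case False
  then show ?thesis by (rule not_integrable_integral_eq)
qed

lemma set_integral_swap_odd:
  fixes f :: "('a::euclidean_space \<times> 'a) \<Rightarrow> real"
  assumes sym: "\<And>z. prod.swap z \<in> A \<longleftrightarrow> z \<in> A"
    and odd: "\<And>z. z \<in> A \<Longrightarrow> f (prod.swap z) = - f z"
  shows "set_lebesgue_integral lborel A f = 0"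
  unfolding set_lebesgue_integral_def
proof (rule integral_swap_odd)
  fix z
  show "indicator A (prod.swap z) *\<^sub>R f (prod.swap z) = - (indicator A z *\<^sub>R f z)"
    using sym[of z] odd[of z] by (cases "z \<in> A") simp_all
qed

section \<open>Determinants of lists of vectors\<close>

lemma enum_idx_props: "distinct (enum_idx :: 'n::finite list) \<and> set (enum_idx :: 'n list) = UNIV"
  unfolding enum_idx_def
  by (rule someI_ex) (use finite_distinct_list[OF finite_class.finite_UNIV] in auto)

lemma length_enum_idx: "length (enum_idx :: 'n::finite list) = CARD('n)"
  using enum_idx_props distinct_card by metis

lemma idx_pos: "idx_pos (i::'n::finite) < CARD('n) \<and> enum_idx ! idx_pos i = i"
proof -
  have "\<exists>m. m < length (enum_idx :: 'n list) \<and> enum_idx ! m = i"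
    using enum_idx_props by (metis in_set_conv_nth UNIV_I)
  then show ?thesis unfolding idx_pos_def length_enum_idx[symmetric] by (rule someI_ex)
qed

lemma idx_pos_enum: "m < CARD('n::finite) \<Longrightarrow> idx_pos (enum_idx ! m :: 'n) = m"
  using idx_pos[of "enum_idx ! m :: 'n"] enum_idx_props length_enum_idx
  by (metis nth_eq_iff_index_eq)

lemma det_uminus_rows: "det (\<chi> i j. - (A $ i $ j)) = (-1) ^ CARD('n) * det (A :: real^'n::finite^'n)"
proof -
  have "(\<Prod>i\<in>UNIV. - A$i$p i) = (-1) ^ CARD('n) * (\<Prod>i\<in>UNIV. A$i$p i)" for p :: "'n \<Rightarrow> 'n"
  proof -
    have "(\<Prod>i\<in>UNIV. - A$i$p i) = (\<Prod>i\<in>UNIV. (-1) * A$i$p i)" by simp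
    also have "\<dots> = (-1) ^ CARD('n) * (\<Prod>i\<in>UNIV. A$i$p i)"
      by (subst prod.distrib) (simp only: prod_constant)
    finally show ?thesis .
  qed
  then show ?thesis unfolding det_def by (simp add: sum_distrib_left mult_ac)
qed

lemma list_det_uminus:
  assumes "length vs = CARD('n::finite)"
  shows "list_det (map uminus vs :: (real^'n) list) = (-1) ^ CARD('n) * list_det vs"
proof -
  have "list_det (map uminus vs) = det (\<chi> i j. - ((\<chi> i j. (vs ! idx_pos i) $ j) $ i $ j))"
    unfolding list_det_def using idx_pos[where 'n='n] assms
    by (intro arg_cong[of _ _ det]) (simp add: vec_eq_iff)
  then show ?thesis
    using det_uminus_rows[of "(\<chi> i j. (vs ! idx_pos i) $ j) :: real^'n^'n"]
    unfolding list_det_def by simp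
qed

lemma nth_exchange:
  assumes "m < length (P @ x # M @ y # R)"
  shows "(P @ y # M @ x # R) ! m
       = (P @ x # M @ y # R) ! (Transposition.transpose (length P) (length P + 1 + length M) m)"
proof -
  consider "m < length P" | "m = length P" | "length P < m \<and> m < length P + 1 + length M"
    | "m = length P + 1 + length M" | "m > length P + 1 + length M" by linarith
  then show ?thesis
  proof cases
    case 3 then show ?thesis by (auto simp: nth_append nth_Cons' Transposition.transpose_def)
  next
    case 5 then show ?thesis by (auto simp: nth_append nth_Cons' Transposition.transpose_def)
  qed (simp_all add: nth_append nth_Cons' Transposition.transpose_def)
qed

lemma list_det_exchange:
  fixes P M R :: "(real^'n::finite) list"
  assumes len: "length (P @ x # M @ y # R) = CARD('n)"
  shows "list_det (P @ y # M @ x # R) = - list_det (P @ x # M @ y # R)"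
proof -
  define vs where "vs = P @ x # M @ y # R"
  define i where "i = length P"
  define j where "j = length P + 1 + length M"
  have ij: "i < CARD('n)" "j < CARD('n)" "i \<noteq> j" using len unfolding i_def j_def by auto
  define a :: 'n where "a = enum_idx ! i"
  define b :: 'n where "b = enum_idx ! j"
  have pa: "idx_pos a = i" "idx_pos b = j" using idx_pos_enum ij unfolding a_def b_def by auto
  have ab: "a \<noteq> b" using pa ij by auto
  have inj: "idx_pos r = idx_pos r' \<Longrightarrow> r = r'" for r r' :: 'n by (metis idx_pos)
  have tp: "idx_pos (Transposition.transpose a b r) = Transposition.transpose i j (idx_pos r)" for r
    using pa inj by (auto simp: Transposition.transpose_def dest: inj)
  have row: "(P @ y # M @ x # R) ! idx_pos r = vs ! idx_pos (Transposition.transpose a b r)" for r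
    unfolding tp vs_def i_def j_def by (rule nth_exchange) (use len idx_pos[of r] in simp)
  have "list_det (P @ y # M @ x # R) = det (\<chi> r. (\<chi> r c. (vs ! idx_pos r) $ c) $ Transposition.transpose a b r)"
    unfolding list_det_def row by simp
  also have "\<dots> = of_int (sign (Transposition.transpose a b)) * list_det vs"
    unfolding list_det_def by (rule det_permute_rows) (simp add: permutes_swap_id)
  also have "\<dots> = - list_det vs" using ab by (simp add: sign_swap_id)
  finally show ?thesis unfolding vs_def .
qed

lemma list_det_exchange_blocks:
  fixes P Q R X Y :: "(real^'n::finite) list"
  assumes "length (P @ X @ Q @ Y @ R) = CARD('n)" "length X = length Y"
  shows "list_det (P @ X @ Q @ Y @ R) = (-1) ^ length X * list_det (P @ Y @ Q @ X @ R)"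
  using assms
proof (induction X arbitrary: P Q Y)
  case Nil then show ?case by simp
next
  case (Cons x X)
  obtain y Y' where Y: "Y = y # Y'" using Cons.prems by (cases Y) auto
  have "list_det (P @ (x # X) @ Q @ Y @ R) = - list_det (P @ y # (X @ Q) @ x # (Y' @ R))"
    using list_det_exchange[of P y "X @ Q" x "Y' @ R"] Cons.prems Y by simp
  also have "list_det (P @ y # (X @ Q) @ x # (Y' @ R)) = list_det ((P @ [y]) @ X @ (Q @ [x]) @ Y' @ R)"
    by simp
  also have "\<dots> = (-1) ^ length X * list_det ((P @ [y]) @ Y' @ (Q @ [x]) @ X @ R)"
    by (rule Cons.IH) (use Cons.prems Y in auto)
  finally show ?case using Y by simp
qed

text \<open>The sign identity behind the theorem: in dimension 2k+1 with k even, negating all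
  vectors of (u, X, Y) and exchanging the two k-blocks X and Y flips the determinant.\<close>
lemma list_det_negate_exchange_halves:
  fixes u :: "real^'n::finite" and X Y :: "(real^'n) list"
  assumes N: "CARD('n) = 2*k+1" and "even k" and "length X = k" "length Y = k"
  shows "list_det (map uminus (u # X @ Y)) = - list_det (u # Y @ X)"
proof -
  have "list_det (map uminus (u # X @ Y)) = - list_det (u # X @ Y)"
    using list_det_uminus[of "u # X @ Y"] assms by simp
  also have "list_det (u # X @ Y) = list_det ([u] @ X @ [] @ Y @ [])" by simp
  also have "\<dots> = (-1) ^ k * list_det ([u] @ Y @ [] @ X @ [])"
    using list_det_exchange_blocks[of "[u]" X "[]" Y "[]"] assms by simp
  finally show ?thesis using \<open>even k\<close> by simp
qed

section \<open>The wedge product on a split frame\<close>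

lemma alt_form_zero_entry:
  assumes "alt_form p A" "length vs = p" "0 \<in> set vs"
  shows "A vs = 0"
proof -
  obtain i where i: "i < p" "vs ! i = 0" using assms(2,3) by (metis in_set_conv_nth)
  have "linear (\<lambda>v. A (vs[i := v]))" using assms(1,2) i unfolding alt_form_def by blast
  then have "A (vs[i := 0]) = 0" using linear_0 by fastforce
  then show ?thesis using i by (metis list_update_id)
qed

lemma nths_disjoint: "(\<And>i. i < length xs \<Longrightarrow> i \<notin> A) \<Longrightarrow> nths xs A = []"
  by (metis (no_types, lifting) length_0_conv length_nths card_eq_0_iff empty_Collect_eq)

lemma length_nths_subset: "A \<subseteq> {..<length xs} \<Longrightarrow> length (nths xs A) = card A"
  by (simp add: length_nths) (metis (no_types, lifting) Collect_cong Collect_mem_eq lessThan_iff subsetD)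

text \<open>A shuffle that does not hand exactly the first block to a feeds a zero
  vector to a or to c, so its term vanishes.\<close>
lemma wedge_split_frame_term_vanishes:
  fixes xs ys :: "'v::real_vector list"
  assumes a: "alt_form p a" and c: "alt_form p c"
    and l: "l = map (\<lambda>v. (v, 0::'v)) xs @ map (\<lambda>v. (0::'v, v)) ys"
    and len: "length l = 2*p" and T: "T \<subseteq> {..<2*p}" "card T = p"
    and ne: "T \<noteq> {..<length xs}"
  shows "a (map fst (nths l T)) * c (map snd (nths l ({..<2*p} - T))) = 0"
proof -
  have lenT: "length (map fst (nths l T)) = p"
    using length_nths_subset[of T l] T len by simp
  have "card ({..<2*p} - T) = p" using T by (simp add: card_Diff_subset finite_subset)
  then have lenTc: "length (map snd (nths l ({..<2*p} - T))) = p"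
    using length_nths_subset[of "{..<2*p} - T" l] len by simp
  consider t where "t \<in> T" "t \<ge> length xs" | t where "t \<in> {..<2*p} - T" "t < length xs"
  proof -
    have "length xs \<le> 2*p" using len l by simp
    moreover have "\<not> T \<subseteq> {..<length xs} \<or> \<not> {..<length xs} \<subseteq> T" using ne by blast
    ultimately show ?thesis using that by (force simp: subset_iff not_less)
  qed
  then show ?thesis
  proof cases
    case 1
    then have "t < length l" "fst (l ! t) = 0" using T len l by (auto simp: nth_append)
    then have "0 \<in> set (map fst (nths l T))" using 1 by (force simp: set_nths)
    then show ?thesis using alt_form_zero_entry[OF a lenT] by simp
  next
    case 2
    then have "t < length l" "snd (l ! t) = 0" using len l by (auto simp: nth_append)
    then have "0 \<in> set (map snd (nths l ({..<2*p} - T)))" using 2 by (force simp: set_nths)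
    then show ?thesis using alt_form_zero_entry[OF c lenTc] by simp
  qed
qed

lemma wedge_split_frame:
  fixes xs ys :: "'v::real_vector list"
  assumes a: "alt_form p a" and c: "alt_form p c" and len: "length xs + length ys = 2*p"
  shows "wedge p p (\<lambda>ws. a (map fst ws)) (\<lambda>ws. c (map snd ws))
           (map (\<lambda>v. (v, 0::'v)) xs @ map (\<lambda>v. (0::'v, v)) ys)
         = (if length xs = p then a xs * c ys else 0)"
proof -
  define l where "l = map (\<lambda>v. (v, 0::'v)) xs @ map (\<lambda>v. (0::'v, v)) ys"
  let ?C = "{T. T \<subseteq> {..<2*p} \<and> card T = p}"
  let ?t = "\<lambda>T. (-1) ^ (\<Sum>T - p * (p - 1) div 2) * a (map fst (nths l T))
                  * c (map snd (nths l ({..<2*p} - T)))"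
  have vanish: "?t T = 0" if "T \<in> ?C" "T \<noteq> {..<length xs}" for T
    using wedge_split_frame_term_vanishes[OF a c l_def _ _ _ that(2)] that(1) len
    unfolding l_def by simp
  have main: "?t {..<p} = a xs * c ys" if "length xs = p"
  proof -
    have "nths l {..<p} = map (\<lambda>v. (v, 0::'v)) xs" using that unfolding l_def by simp
    moreover have "nths (map (\<lambda>v. (v, 0::'v)) xs) ({..<2*p} - {..<p}) = []"
      using that by (intro nths_disjoint) auto
    then have "nths l ({..<2*p} - {..<p}) = map (\<lambda>v. (0::'v, v)) ys"
      using that len unfolding l_def nths_append by (simp add: nths_all)
    ultimately show ?thesis by (simp add: comp_def lessThan_atLeast0 Sum_Ico_nat)
  qed
  have "wedge p p (\<lambda>ws. a (map fst ws)) (\<lambda>ws. c (map snd ws)) l = (\<Sum>T\<in>?C. ?t T)"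
    unfolding wedge_def by (simp add: mult_2)
  also have "\<dots> = (\<Sum>T\<in>?C. if T = {..<length xs} then ?t T else 0)"
    using vanish by (intro sum.cong) auto
  also have "\<dots> = (if length xs = p then a xs * c ys else 0)"
    using main len by (simp add: sum.delta')
  finally show ?thesis unfolding l_def .
qed

section \<open>The Gauss map under exchange of the two points\<close>

lemma gauss_swap: "gauss (prod.swap z) = - (gauss z :: real^'n::finite)"
  unfolding gauss_def by (cases z) (auto simp: norm_minus_commute scaleR_diff_right)

lemma gauss_differentiable:
  assumes "fst z \<noteq> snd (z :: (real^'n::finite) \<times> (real^'n))"
  shows "gauss differentiable (at z)"
proof -
  have ne: "norm (snd z - fst z) \<noteq> 0" using assms by simp
  have diff: "(\<lambda>w::(real^'n) \<times> (real^'n). snd w - fst w) differentiable (at z)"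
    by (intro differentiable_diff bounded_linear_imp_differentiable bounded_linear_fst bounded_linear_snd)
  have "(\<lambda>w. norm (snd w - fst w)) differentiable (at z)"
    by (rule differentiable_compose[of norm]) (use ne diff in auto)
  then have "(\<lambda>w. inverse (norm (snd w - fst w))) differentiable (at z)"
    by (rule differentiable_inverse) (use ne in simp)
  then show ?thesis using diff unfolding gauss_def by (intro differentiable_scaleR)
qed

text \<open>Since gauss \<circ> swap = - gauss, the derivative at the exchanged point is
  v \<mapsto> - dg_z (swap v).\<close>
lemma gauss_deriv_swap:
  assumes "fst z \<noteq> snd (z :: (real^'n::finite) \<times> (real^'n))"
  shows "frechet_derivative gauss (at (prod.swap z)) = (\<lambda>v. - frechet_derivative gauss (at z) (prod.swap v))"
proof -
  define g' where "g' = frechet_derivative gauss (at z)"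
  have d: "(gauss has_derivative g') (at z)"
    unfolding g'_def using gauss_differentiable[OF assms] frechet_derivative_works by blast
  have "((\<lambda>w::(real^'n) \<times> (real^'n). (snd w, fst w)) has_derivative (\<lambda>v. (snd v, fst v))) (at (prod.swap z))"
    by (intro derivative_intros)
  then have s: "(prod.swap has_derivative prod.swap) (at (prod.swap z))"
    by (simp add: prod.swap_def[abs_def])
  have "((\<lambda>w. gauss (prod.swap w)) has_derivative (\<lambda>v. g' (prod.swap v))) (at (prod.swap z))"
    using diff_chain_at[OF s, of gauss g'] d by (simp add: comp_def)
  then have "((\<lambda>w. - gauss (prod.swap w)) has_derivative (\<lambda>v. - g' (prod.swap v))) (at (prod.swap z))"
    by (rule has_derivative_minus)
  moreover have "(\<lambda>w. - gauss (prod.swap w)) = gauss" by (simp add: gauss_swap fun_eq_iff)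
  ultimately show ?thesis unfolding g'_def[symmetric] using frechet_derivative_at by metis
qed

text \<open>half_swap n exchanges the index ranges {..<n} and {n..<2n}; it describes how the
  frame of R^n \<times> R^n is permuted when the two factors are exchanged.\<close>
definition half_swap :: "nat \<Rightarrow> nat \<Rightarrow> nat" where
  "half_swap n i = (if i < n then i + n else i - n)"

lemma half_swap_half_swap: "i < 2*n \<Longrightarrow> half_swap n (half_swap n i) = i"
  unfolding half_swap_def by auto

lemma half_swap_lt: "i < 2*n \<Longrightarrow> half_swap n i < 2*n"
  unfolding half_swap_def by auto

lemma half_swap_inj: "inj_on (half_swap n) {..<2*n}"
  by (rule inj_on_inverseI[where g="half_swap n"]) (simp add: half_swap_half_swap)

lemma half_swap_image_subset: "S \<subseteq> {..<2*n} \<Longrightarrow> half_swap n ` S \<subseteq> {..<2*n}"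
  using half_swap_lt by auto

lemma half_swap_image_image: "S \<subseteq> {..<2*n} \<Longrightarrow> half_swap n ` half_swap n ` S = S"
  by (force simp: image_image half_swap_half_swap subset_iff intro: image_eqI)

lemma half_swap_card: "S \<subseteq> {..<2*n} \<Longrightarrow> card (half_swap n ` S) = card S"
  by (rule card_image, rule inj_on_subset[OF half_swap_inj])

lemma half_swap_complement:
  assumes "S \<subseteq> {..<2*n}"
  shows "{..<2*n} - half_swap n ` S = half_swap n ` ({..<2*n} - S)"
proof -
  have "half_swap n ` {..<2*n} = {..<2*n}"
    using half_swap_image_image[of "{..<2*n}" n] half_swap_image_subset[of "{..<2*n}" n]
    by (metis image_mono order.refl subset_antisym)
  then show ?thesis using inj_on_image_set_diff[OF half_swap_inj, of "{..<2*n}" S] assms by simp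
qed

lemma half_swap_mem_lower: "i < n \<Longrightarrow> S \<subseteq> {..<2*n} \<Longrightarrow> i \<in> half_swap n ` S \<longleftrightarrow> i + n \<in> S"
  by (force simp: half_swap_def subset_iff split: if_splits intro: image_eqI[where x="i+n"])

lemma half_swap_mem_upper: "i < n \<Longrightarrow> S \<subseteq> {..<2*n} \<Longrightarrow> i + n \<in> half_swap n ` S \<longleftrightarrow> i \<in> S"
  by (force simp: half_swap_def subset_iff split: if_splits intro: image_eqI[where x=i])

text \<open>If S meets both halves in equally many elements, exchanging the halves moves as
  many indices up by n as down by n, so the index sum (hence the shuffle sign) is kept.\<close>
lemma half_swap_sum:
  assumes S: "S \<subseteq> {..<2*n}"
    and c: "card {i. i < n \<and> i \<in> S} = card {j. j < n \<and> j + n \<in> S}"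
  shows "\<Sum>(half_swap n ` S) = \<Sum>S"
proof -
  have fS: "finite S" using S finite_subset by blast
  have "S - {x. x < n} = (\<lambda>j. j + n) ` {j. j < n \<and> j + n \<in> S}"
  proof (intro set_eqI iffI)
    fix x assume x: "x \<in> S - {x. x < n}"
    then have "x - n < n" "x = x - n + n" using S by auto
    then show "x \<in> (\<lambda>j. j + n) ` {j. j < n \<and> j + n \<in> S}"
      using x by (intro image_eqI[where x="x - n"]) auto
  qed auto
  then have "card (S - {x. x < n}) = card {j. j < n \<and> j + n \<in> S}"
    by (simp add: card_image inj_on_def)
  moreover have "S \<inter> {x. x < n} = {i. i < n \<and> i \<in> S}" by blast
  ultimately have c2: "card (S \<inter> - {x. x < n}) = card (S \<inter> {x. x < n})"
    using c by (simp add: Diff_eq)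
  have "int (\<Sum>(half_swap n ` S)) = (\<Sum>i\<in>S. int (half_swap n i))"
    using sum.reindex[OF inj_on_subset[OF half_swap_inj S]] by simp
  also have "\<dots> = (\<Sum>i\<in>S. int i + (if i < n then int n else - int n))"
    by (rule sum.cong) (auto simp: half_swap_def of_nat_diff)
  also have "\<dots> = int (\<Sum>S) + (int n * card (S \<inter> {x. x < n}) - int n * card (S \<inter> - {x. x < n}))"
    by (simp add: sum.distrib sum.If_cases fS)
  also have "\<dots> = int (\<Sum>S)" using c2 by simp
  finally show ?thesis by (simp only: of_nat_sum[symmetric] of_nat_eq_iff)
qed

lemma sum_half_swap_reindex:
  "(\<Sum>S\<in>{S. S \<subseteq> {..<2*n} \<and> card S = m}. f (half_swap n ` S))
   = (\<Sum>S\<in>{S. S \<subseteq> {..<2*n} \<and> card S = m}. f S)"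
  by (rule sum.reindex_bij_witness[where i="\<lambda>S. half_swap n ` S" and j="\<lambda>S. half_swap n ` S"])
    (auto simp: half_swap_image_image half_swap_image_subset half_swap_card)

definition std_basis :: "(real^'n::finite) list" where
  "std_basis = map (\<lambda>i. axis i 1) enum_idx"

lemma length_std_basis: "length (std_basis :: (real^'n::finite) list) = CARD('n)"
  unfolding std_basis_def by (simp add: length_enum_idx)

lemma prod_basis_split:
  "(prod_basis :: ((real^'n::finite) \<times> (real^'n)) list)
   = map (\<lambda>v. (v, 0)) std_basis @ map (\<lambda>v. (0, v)) std_basis"
  unfolding prod_basis_def std_basis_def by (simp add: comp_def)

definition lower_part :: "nat set \<Rightarrow> (real^'n::finite) list" where
  "lower_part S = nths std_basis S"

definition upper_part :: "nat set \<Rightarrow> (real^'n::finite) list" where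
  "upper_part S = nths std_basis {j. j + CARD('n) \<in> S}"

lemma nths_prod_basis:
  "nths (prod_basis :: ((real^'n::finite) \<times> (real^'n)) list) S
   = map (\<lambda>v. (v, 0)) (lower_part S) @ map (\<lambda>v. (0, v)) (upper_part S)"
  unfolding prod_basis_split nths_append nths_map lower_part_def upper_part_def
  by (simp add: length_std_basis)

lemma length_lower_part: "length (lower_part S :: (real^'n::finite) list) = card {i. i < CARD('n) \<and> i \<in> S}"
  unfolding lower_part_def length_nths length_std_basis ..

lemma length_upper_part:
  "length (upper_part S :: (real^'n::finite) list) = card {j. j < CARD('n) \<and> j + CARD('n) \<in> S}"
  unfolding upper_part_def length_nths length_std_basis by simp

lemma length_lower_upper_part:
  assumes "S \<subseteq> {..<2*CARD('n::finite)}"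
  shows "length (lower_part S :: (real^'n) list) + length (upper_part S :: (real^'n) list) = card S"
proof -
  have "length (nths (prod_basis :: ((real^'n) \<times> (real^'n)) list) S) = card S"
    using assms by (intro length_nths_subset) (simp add: prod_basis_split length_std_basis mult_2)
  then show ?thesis by (simp add: nths_prod_basis)
qed

lemma nths_cong_lt: "(\<And>i. i < length xs \<Longrightarrow> i \<in> A \<longleftrightarrow> i \<in> B) \<Longrightarrow> nths xs A = nths xs B"
  unfolding nths_def by (rule arg_cong[where f="map fst"], rule filter_cong) (auto simp: in_set_zip)

lemma lower_part_half_swap:
  "S \<subseteq> {..<2*CARD('n)} \<Longrightarrow> (lower_part (half_swap CARD('n) ` S) :: (real^'n::finite) list) = upper_part S"
  unfolding lower_part_def upper_part_def
  by (rule nths_cong_lt) (simp add: length_std_basis half_swap_mem_lower)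

lemma upper_part_half_swap:
  "S \<subseteq> {..<2*CARD('n)} \<Longrightarrow> (upper_part (half_swap CARD('n) ` S) :: (real^'n::finite) list) = lower_part S"
  unfolding lower_part_def upper_part_def
  by (rule nths_cong_lt) (simp add: length_std_basis half_swap_mem_upper)

section \<open>The helicity density as a sum over shuffles\<close>

text \<open>The contribution of the shuffle S (the frame positions fed to alpha_x \<and> alpha_y) to
  the density at a configuration with form values a, c, Gauss direction u and Gauss
  derivative L, before division by the area of the sphere.\<close>
definition split_term ::
  "nat \<Rightarrow> ((real^'n::finite) list \<Rightarrow> real) \<Rightarrow> ((real^'n) list \<Rightarrow> real) \<Rightarrow> real^'n
     \<Rightarrow> ((real^'n) \<times> (real^'n) \<Rightarrow> real^'n) \<Rightarrow> nat set \<Rightarrow> real" where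
  "split_term p a c u L S =
     (-1) ^ (\<Sum>S - 2*p*(2*p-1) div 2)
     * (if length (lower_part S :: (real^'n) list) = p then a (lower_part S) * c (upper_part S) else 0)
     * list_det (u # map L (nths prod_basis ({..<2*CARD('n)} - S)))"

lemma helicity_density_split:
  fixes \<alpha> :: "real^'n::finite \<Rightarrow> (real^'n) list \<Rightarrow> real"
  assumes N: "CARD('n) = 2*k+1"
    and ax: "alt_form (k+1) (\<alpha> (fst z))" and ay: "alt_form (k+1) (\<alpha> (snd z))"
  shows "helicity_density (k+1) \<alpha> z =
    (\<Sum>S\<in>{S. S \<subseteq> {..<2*CARD('n)} \<and> card S = 2*(k+1)}.
       split_term (k+1) (\<alpha> (fst z)) (\<alpha> (snd z)) (gauss z) (frechet_derivative gauss (at z)) S)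
    / sphere_area TYPE('n)"
proof -
  have dim: "2*(k+1) + (CARD('n) - 1) = 2*CARD('n)" using N by simp
  show ?thesis
    unfolding helicity_density_def wedge_def[of "2*(k+1)" "CARD('n) - 1"] dim sum_divide_distrib
  proof (intro sum.cong refl)
    fix S assume "S \<in> {S. S \<subseteq> {..<2*CARD('n)} \<and> card S = 2*(k+1)}"
    then have "length (lower_part S :: (real^'n) list) + length (upper_part S :: (real^'n) list) = 2*(k+1)"
      using length_lower_upper_part[where 'n='n] by auto
    then have "wedge (k+1) (k+1) (\<lambda>ws. \<alpha> (fst z) (map fst ws)) (\<lambda>ws. \<alpha> (snd z) (map snd ws))
        (nths prod_basis S)
      = (if length (lower_part S :: (real^'n) list) = k+1
         then \<alpha> (fst z) (lower_part S) * \<alpha> (snd z) (upper_part S) else 0)"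
      unfolding nths_prod_basis by (rule wedge_split_frame[OF ax ay])
    then show "(-1) ^ (\<Sum>S - 2*(k+1)*(2*(k+1)-1) div 2)
        * wedge (k+1) (k+1) (\<lambda>ws. \<alpha> (fst z) (map fst ws)) (\<lambda>ws. \<alpha> (snd z) (map snd ws)) (nths prod_basis S)
        * gauss_pullback z (nths prod_basis ({..<2*CARD('n)} - S))
      = split_term (k+1) (\<alpha> (fst z)) (\<alpha> (snd z)) (gauss z) (frechet_derivative gauss (at z)) S
        / sphere_area TYPE('n)"
      unfolding split_term_def gauss_pullback_def sphere_vol_def by simp
  qed
qed

lemma complement_parts_length:
  assumes N: "CARD('n::finite) = 2*k+1"
    and lo: "length (lower_part S :: (real^'n) list) = k+1"
    and hi: "length (upper_part S :: (real^'n) list) = k+1"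
  shows "length (lower_part ({..<2*CARD('n)} - S) :: (real^'n) list) = k"
    and "length (upper_part ({..<2*CARD('n)} - S) :: (real^'n) list) = k"
proof -
  let ?n = "CARD('n)"
  have "length (lower_part ({..<2*?n} - S) :: (real^'n) list) = card ({..<?n} - {i. i < ?n \<and> i \<in> S})"
    unfolding length_lower_part by (rule arg_cong[where f=card]) auto
  also have "\<dots> = ?n - card {i. i < ?n \<and> i \<in> S}" by (subst card_Diff_subset) auto
  finally show "length (lower_part ({..<2*?n} - S) :: (real^'n) list) = k"
    using lo N by (simp add: length_lower_part)
  have "length (upper_part ({..<2*?n} - S) :: (real^'n) list)
      = card ({..<?n} - {j. j < ?n \<and> j + ?n \<in> S})"
    unfolding length_upper_part by (rule arg_cong[where f=card]) auto
  also have "\<dots> = ?n - card {j. j < ?n \<and> j + ?n \<in> S}" by (subst card_Diff_subset) auto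
  finally show "length (upper_part ({..<2*?n} - S) :: (real^'n) list) = k"
    using hi N by (simp add: length_upper_part)
qed

text \<open>Here u \<mapsto> -u and L \<mapsto> -L \<circ> swap are the Gauss data at the
  exchanged configuration (gauss_swap, gauss_deriv_swap); the sign is
  list_det_negate_exchange_halves, and the shuffle signs agree by half_swap_sum.\<close>
lemma split_term_swap:
  fixes a c :: "(real^'n::finite) list \<Rightarrow> real"
  assumes N: "CARD('n) = 2*k+1" and ev: "even k"
    and S: "S \<subseteq> {..<2*CARD('n)}" "card S = 2*(k+1)"
  shows "split_term (k+1) c a (-u) (\<lambda>v. - L (prod.swap v)) S
       = - split_term (k+1) a c u L (half_swap CARD('n) ` S)"
proof (cases "length (lower_part S :: (real^'n) list) = k+1")
  case False
  then show ?thesis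
    using length_lower_upper_part[OF S(1)] S unfolding split_term_def lower_part_half_swap[OF S(1)]
    by simp
next
  case True
  let ?n = "CARD('n)"
  define D where "D = {..<2*?n} - S"
  have Dsub: "D \<subseteq> {..<2*?n}" unfolding D_def by blast
  have hi: "length (upper_part S :: (real^'n) list) = k+1"
    using length_lower_upper_part[OF S(1)] S True by simp
  have sign: "\<Sum>(half_swap ?n ` S) = \<Sum>S"
    using half_swap_sum[OF S(1)] True hi by (simp add: length_lower_part length_upper_part)
  define X where "X = map (\<lambda>v. L (0, v)) (lower_part D)"
  define Y where "Y = map (\<lambda>v. L (v, 0)) (upper_part D)"
  have XY: "length X = k" "length Y = k"
    using complement_parts_length[OF N True hi] unfolding X_def Y_def D_def by simp_all
  have "list_det (- u # map (\<lambda>v. - L (prod.swap v)) (nths prod_basis D))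
      = list_det (map uminus (u # X @ Y))"
    unfolding nths_prod_basis X_def Y_def by (simp add: comp_def)
  also have "\<dots> = - list_det (u # Y @ X)"
    by (rule list_det_negate_exchange_halves[OF N ev]) (use XY in simp_all)
  also have "u # Y @ X = u # map L (nths prod_basis ({..<2*?n} - half_swap ?n ` S))"
    unfolding half_swap_complement[OF S(1)] D_def[symmetric] nths_prod_basis X_def Y_def
      lower_part_half_swap[OF Dsub] upper_part_half_swap[OF Dsub]
    by (simp add: comp_def)
  finally show ?thesis
    unfolding split_term_def lower_part_half_swap[OF S(1)] upper_part_half_swap[OF S(1)] sign
    using True hi by (simp add: D_def)
qed

lemma helicity_density_swap:
  fixes \<alpha> :: "real^'n::finite \<Rightarrow> (real^'n) list \<Rightarrow> real"
  assumes N: "CARD('n) = 2*k+1" and ev: "even k"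
    and ax: "alt_form (k+1) (\<alpha> (fst z))" and ay: "alt_form (k+1) (\<alpha> (snd z))"
    and ne: "fst z \<noteq> snd z"
  shows "helicity_density (k+1) \<alpha> (prod.swap z) = - helicity_density (k+1) \<alpha> z"
proof -
  let ?C = "{S. S \<subseteq> {..<2*CARD('n)} \<and> card S = 2*(k+1)}"
  let ?t = "split_term (k+1) (\<alpha> (fst z)) (\<alpha> (snd z)) (gauss z) (frechet_derivative gauss (at z))"
  have "helicity_density (k+1) \<alpha> (prod.swap z) =
      (\<Sum>S\<in>?C. split_term (k+1) (\<alpha> (snd z)) (\<alpha> (fst z)) (- gauss z)
                  (\<lambda>v. - frechet_derivative gauss (at z) (prod.swap v)) S) / sphere_area TYPE('n)"
    using helicity_density_split[OF N, of \<alpha> "prod.swap z"] ax ay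
    by (simp add: gauss_swap gauss_deriv_swap[OF ne])
  also have "\<dots> = (\<Sum>S\<in>?C. - ?t (half_swap CARD('n) ` S)) / sphere_area TYPE('n)"
    using split_term_swap[OF N ev] by simp
  also have "\<dots> = - (\<Sum>S\<in>?C. ?t S) / sphere_area TYPE('n)"
    using sum_half_swap_reindex[where f="?t"] by (simp only: sum_negf)
  also have "\<dots> = - helicity_density (k+1) \<alpha> z"
    using helicity_density_split[OF N ax ay] by simp
  finally show ?thesis .
qed

theorem proposition2p11:
  fixes k :: nat
    and \<Omega> U :: "(real^'n::finite) set"
    and \<alpha> :: "real^'n \<Rightarrow> (real^'n) list \<Rightarrow> real"
  assumes "k \<ge> 1" and "even k"
    and "CARD('n) = 2 * k + 1"
    and "compact \<Omega>" and "connected \<Omega>" and "interior \<Omega> \<noteq> {}"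
    and "smooth_boundary \<Omega>"
    and "open U" and "\<Omega> \<subseteq> U"
    and "diff_form (k + 1) U \<alpha>"
    and "\<forall>x\<in>\<Omega>. \<forall>vs. length vs = k + 2 \<longrightarrow> ext_d \<alpha> x vs = 0"
    and "dirichlet (k + 1) \<Omega> \<alpha>"
  shows "helicity (k + 1) \<Omega> \<alpha> = 0"
proof -
  have alt: "alt_form (k + 1) (\<alpha> x)" if "x \<in> \<Omega>" for x
    using assms(9,10) that unfolding diff_form_def by blast
  have odd: "helicity_density (k + 1) \<alpha> (prod.swap z) = - helicity_density (k + 1) \<alpha> z"
    if "z \<in> config2 \<Omega>" for z
  proof -
    have "fst z \<in> \<Omega>" "snd z \<in> \<Omega>" "fst z \<noteq> snd z"
      using that unfolding config2_def by auto
    then show ?thesis by (intro helicity_density_swap[OF assms(3,2)] alt)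
  qed
  show ?thesis
    unfolding helicity_def
  proof (rule set_integral_swap_odd)
    show "prod.swap z \<in> config2 \<Omega> \<longleftrightarrow> z \<in> config2 \<Omega>" for z
      by (cases z) (auto simp: config2_def)
  qed (rule odd)
qed

end
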